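(* Let $Q$ be a connected quiver with two mutable vertices $1,2$ and one frozen vertex $u$, with $|b_{12}|\ge2$. Then for any infinite reduced mutation sequence $\mathbf M$, there are at most four values $\ell\ge0$ such that $Q^{(\ell)}_{\mathbf M}$ is acyclic.
   Context: A quiver is a finite directed multigraph with no loops and no oriented 2-cycles, whose vertex set is partitioned into mutable and frozen vertices. $b_{ik}$ = number of arrows $i\to k$ minus number of arrows $k\to i$. Mutation $\mu_j$ at mutable $j$: for each path $i\to j\to k$ add $b_{ij}b_{jk}$ arrows $i\to k$, reverse all arrows at $j$, cancel 2-cycles. A mutation sequence $\mathbf M=m_1m_2\cdots$ has $Q^{(0)}_{\mathbf M}=Q$, $Q^{(i)}_{\mathbf M}=\mu_{m_i}(Q^{(i-1)}_{\mathbf M})$; reduced means $m_i\ne m_{i+1}$ (so in rank 2 it alternates between $1$ and $2$). Connected: the mutable part is connected as an undirected graph and every frozen vertex is adjacent to some mutable vertex. Acyclic means the underlying directed graph has no directed cycle. *)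

theory Defs
  imports Main
begin

datatype vtx = V1 | V2 | U

definition mutable :: "vtx \<Rightarrow> bool" where
  "mutable v \<longleftrightarrow> v = V1 \<or> v = V2"

text \<open>A quiver without loops and oriented 2-cycles is determined by its exchange
  matrix b_ik = #(arrows i to k) - #(arrows k to i), which is skew-symmetric.\<close>
type_synonym quiver = "vtx \<Rightarrow> vtx \<Rightarrow> int"

definition skew :: "quiver \<Rightarrow> bool" where
  "skew B \<longleftrightarrow> (\<forall>i k. B i k = - B k i)"

text \<open>Mutation at j: for each path i to j to k add b_ij b_jk arrows i to k,
  reverse all arrows at j, cancel 2-cycles.\<close>
definition mut :: "vtx \<Rightarrow> quiver \<Rightarrow> quiver" where
  "mut j B = (\<lambda>i k. if i = j \<or> k = j then - B i k
      else B i k + max (B i j) 0 * max (B j k) 0 - max (B k j) 0 * max (B j i) 0)"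

text \<open>Q^(0) = Q, Q^(l+1) = mu_{m_{l+1}}(Q^(l)); the sequence is M 0, M 1, ...\<close>
fun mut_seq :: "(nat \<Rightarrow> vtx) \<Rightarrow> quiver \<Rightarrow> nat \<Rightarrow> quiver" where
  "mut_seq M B 0 = B"
| "mut_seq M B (Suc l) = mut (M l) (mut_seq M B l)"

definition reduced_seq :: "(nat \<Rightarrow> vtx) \<Rightarrow> bool" where
  "reduced_seq M \<longleftrightarrow> (\<forall>i. mutable (M i) \<and> M i \<noteq> M (Suc i))"

definition arrows :: "quiver \<Rightarrow> (vtx \<times> vtx) set" where
  "arrows B = {(i, k). B i k > 0}"

definition acyclic_quiver :: "quiver \<Rightarrow> bool" where
  "acyclic_quiver B \<longleftrightarrow> acyclic (arrows B)"

text \<open>Connected: mutable part connected and the frozen vertex adjacent to a mutable one.\<close>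
definition connected_quiver :: "quiver \<Rightarrow> bool" where
  "connected_quiver B \<longleftrightarrow> B V1 V2 \<noteq> 0 \<and> (B V1 U \<noteq> 0 \<or> B V2 U \<noteq> 0)"

end

theory Submission
  imports Defs
begin

text \<open>Write \<open>j\<close> for the vertex mutated next, \<open>k\<close> for the other mutable vertex and
  track \<open>(s, x, y) = (b\<^sub>j\<^sub>k, b\<^sub>j\<^sub>u, b\<^sub>k\<^sub>u)\<close>.  Mutating at \<open>j\<close> keeps \<open>s\<close> (with the roles of
  \<open>j\<close> and \<open>k\<close> swapped) and sends \<open>(x, y)\<close> to \<open>(b'\<^sub>k\<^sub>u, -x)\<close>.  The only possible oriented
  cycle is the triangle through \<open>u\<close>.  For \<open>|s| \<ge> 2\<close> a triangle with \<open>|y| \<le> |x|\<close> stays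
  a triangle with \<open>|y| \<le> |x|\<close> forever, and one with \<open>|x| \<le> |y|\<close> has been one forever
  before.  Hence the quivers without triangle form an interval of indices, and a
  direct computation shows that no five consecutive quivers avoid the triangle.\<close>

lemma order_convex_card_le:
  fixes P :: "nat \<Rightarrow> bool"
  assumes convex: "\<And>a n b. a \<le> n \<Longrightarrow> n \<le> b \<Longrightarrow> P a \<Longrightarrow> P b \<Longrightarrow> P n"
    and gap: "\<And>l. \<exists>i\<le>k. \<not> P (l + i)"
  shows "finite {l. P l} \<and> card {l. P l} \<le> k"
proof (cases "\<exists>l. P l")
  case False
  then show ?thesis by simp
next
  case True
  define m where "m = (LEAST l. P l)"
  have "P m" unfolding m_def using True by (rule LeastI_ex)
  obtain i where "i \<le> k" and not_P: "\<not> P (m + i)" using gap by blast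
  have sub: "{l. P l} \<subseteq> {m..<m + i}"
  proof
    fix l assume "l \<in> {l. P l}"
    then have "P l" by simp
    then have "m \<le> l" unfolding m_def by (rule Least_le)
    moreover have "l < m + i"
    proof (rule ccontr)
      assume "\<not> l < m + i"
      then have "P (m + i)" using convex[of m "m + i" l] \<open>P m\<close> \<open>P l\<close> by simp
      with not_P show False by contradiction
    qed
    ultimately show "l \<in> {m..<m + i}" by simp
  qed
  then have "finite {l. P l}" using finite_subset by blast
  moreover have "card {l. P l} \<le> i" using card_mono[OF _ sub] by simp
  ultimately show ?thesis using \<open>i \<le> k\<close> by simp
qed

text \<open>The entry \<open>b'\<^sub>k\<^sub>u\<close> of \<open>\<mu>\<^sub>j(B)\<close>, where \<open>s = b\<^sub>j\<^sub>k\<close>, \<open>x = b\<^sub>j\<^sub>u\<close> and \<open>y = b\<^sub>k\<^sub>u\<close>.\<close>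
definition mut_frozen_entry :: "int \<Rightarrow> int \<Rightarrow> int \<Rightarrow> int" where
  "mut_frozen_entry s x y = y + max (-s) 0 * max x 0 - max (-x) 0 * max s 0"

definition oriented_triangle :: "int \<Rightarrow> int \<Rightarrow> int \<Rightarrow> bool" where
  "oriented_triangle s x y \<longleftrightarrow> (s > 0 \<and> y > 0 \<and> x < 0) \<or> (s < 0 \<and> y < 0 \<and> x > 0)"

lemma mut_frozen_entry_uminus: "mut_frozen_entry (-s) (-x) (-y) = - mut_frozen_entry s x y"
  unfolding mut_frozen_entry_def by (simp add: algebra_simps)

lemma mut_frozen_entry_nonneg: "0 \<le> s \<Longrightarrow> mut_frozen_entry s x y = y + s * min x 0"
  unfolding mut_frozen_entry_def by (simp add: max_def min_def)

lemma oriented_triangle_uminus: "oriented_triangle (-s) (-x) (-y) \<longleftrightarrow> oriented_triangle s x y"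
  unfolding oriented_triangle_def by auto

locale frozen_orbit =
  fixes s :: int and x y :: "nat \<Rightarrow> int"
  assumes x_Suc: "x (Suc l) = mut_frozen_entry s (x l) (y l)"
    and y_Suc: "y (Suc l) = - x l"
begin

abbreviation triangle :: "nat \<Rightarrow> bool" where
  "triangle l \<equiv> oriented_triangle s (x l) (y l)"

lemma frozen_orbit_uminus: "frozen_orbit (-s) (\<lambda>l. - x l) (\<lambda>l. - y l)"
  by unfold_locales (simp_all add: x_Suc y_Suc mut_frozen_entry_uminus)

lemma not_both_zero: "x 0 \<noteq> 0 \<or> y 0 \<noteq> 0 \<Longrightarrow> x l \<noteq> 0 \<or> y l \<noteq> 0"
  by (induction l) (auto simp: x_Suc y_Suc mut_frozen_entry_def)

end

locale frozen_orbit_pos = frozen_orbit +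
  assumes two_le_s: "2 \<le> s"
begin

lemma x_Suc_pos: "x (Suc l) = y l + s * min (x l) 0"
  using x_Suc mut_frozen_entry_nonneg two_le_s by simp

lemma triangle_iff: "triangle l \<longleftrightarrow> x l < 0 \<and> 0 < y l"
  using two_le_s unfolding oriented_triangle_def by auto

lemma triangle_Suc_if_abs_le:
  assumes "triangle l" "\<bar>y l\<bar> \<le> \<bar>x l\<bar>"
  shows "triangle (Suc l) \<and> \<bar>y (Suc l)\<bar> \<le> \<bar>x (Suc l)\<bar>"
proof -
  have "x l < 0" "0 < y l" "y l \<le> - x l" using assms triangle_iff by auto
  moreover have "s * x l \<le> 2 * x l" using \<open>x l < 0\<close> two_le_s by simp
  ultimately have "x (Suc l) \<le> x l" using x_Suc_pos[of l] by linarith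
  with \<open>x l < 0\<close> show ?thesis using triangle_iff[of "Suc l"] y_Suc[of l] by simp
qed

lemma triangle_if_Suc_abs_le:
  assumes "triangle (Suc l)" "\<bar>x (Suc l)\<bar> \<le> \<bar>y (Suc l)\<bar>"
  shows "triangle l \<and> \<bar>x l\<bar> \<le> \<bar>y l\<bar>"
proof -
  have "x l < 0" "x l \<le> x (Suc l)"
    using assms triangle_iff[of "Suc l"] y_Suc[of l] by auto
  moreover have "s * x l \<le> 2 * x l" using \<open>x l < 0\<close> two_le_s by simp
  ultimately have "- x l \<le> y l" using x_Suc_pos[of l] by linarith
  with \<open>x l < 0\<close> show ?thesis using triangle_iff[of l] by simp
qed

lemma triangle_forever:
  assumes "triangle n"
  shows "(\<forall>m\<ge>n. triangle m) \<or> (\<forall>m\<le>n. triangle m)"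
proof (cases "\<bar>y n\<bar> \<le> \<bar>x n\<bar>")
  case True
  have "triangle m \<and> \<bar>y m\<bar> \<le> \<bar>x m\<bar>" if "n \<le> m" for m
    using that
  proof (induction m rule: dec_induct)
    case base
    then show ?case using assms True by simp
  next
    case (step m)
    then show ?case using triangle_Suc_if_abs_le by blast
  qed
  then show ?thesis by blast
next
  case False
  have "triangle m \<and> \<bar>x m\<bar> \<le> \<bar>y m\<bar>" if "m \<le> n" for m
    using that
  proof (induction m rule: inc_induct)
    case base
    then show ?case using assms False by simp
  next
    case (step m)
    then show ?case using triangle_if_Suc_abs_le by blast
  qed
  then show ?thesis by blast
qed

lemma non_triangles_convex:
  assumes "a \<le> n" "n \<le> b" "\<not> triangle a" "\<not> triangle b"
  shows "\<not> triangle n"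
  using triangle_forever assms by blast

lemma triangle_if_x_neg:
  assumes "x l < 0"
  shows "triangle l \<or> triangle (Suc l)"
proof (cases "0 < y l")
  case True
  with assms show ?thesis using triangle_iff by simp
next
  case False
  have "s * x l < 0" using assms two_le_s by (simp add: mult_pos_neg)
  then have "x (Suc l) < 0" using False assms x_Suc_pos[of l] by simp
  then show ?thesis using assms triangle_iff[of "Suc l"] y_Suc[of l] by simp
qed

lemma x_Suc_if_x_nonneg: "0 \<le> x l \<Longrightarrow> x (Suc l) = y l"
  by (simp add: x_Suc_pos)

text \<open>If none of the quivers \<open>l, \<dots>, l + 4\<close> contains the triangle, the entries
  \<open>x l, \<dots>, x (l + 3)\<close> are all nonnegative; since \<open>x (l + 2) = - x l\<close> and
  \<open>x (l + 3) = - y l\<close>, this forces \<open>x l = y l = 0\<close>.\<close>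
lemma triangle_within_five:
  assumes "x l \<noteq> 0 \<or> y l \<noteq> 0"
  shows "\<exists>i\<le>4. triangle (l + i)"
proof (rule ccontr)
  assume "\<not> ?thesis"
  then have no_triangle: "\<not> triangle (l + i)" if "i \<le> 4" for i
    using that by blast
  have nonneg: "0 \<le> x (l + i)" if "i \<le> 3" for i
  proof -
    have "\<not> triangle (l + i)" "\<not> triangle (Suc (l + i))"
      using no_triangle[of i] no_triangle[of "Suc i"] that by simp_all
    then show ?thesis using triangle_if_x_neg by force
  qed
  have "x (l + 2) = - x l"
    using x_Suc_if_x_nonneg[of "Suc l"] nonneg[of 1] y_Suc by simp
  moreover have "x (l + 3) = - y l"
    using x_Suc_if_x_nonneg[of "Suc (Suc l)"] nonneg[of 2] y_Suc
      x_Suc_if_x_nonneg[of l] nonneg[of 0] by (simp add: numeral_3_eq_3)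
  ultimately show False
    using nonneg[of 0] nonneg[of 1] nonneg[of 2] nonneg[of 3] x_Suc_if_x_nonneg[of l] assms
    by simp
qed

lemma non_triangles_card_le_4_pos:
  assumes "x 0 \<noteq> 0 \<or> y 0 \<noteq> 0"
  shows "finite {l. \<not> triangle l} \<and> card {l. \<not> triangle l} \<le> 4"
  using order_convex_card_le[where P = "\<lambda>l. \<not> triangle l"]
    non_triangles_convex triangle_within_five[OF not_both_zero[OF assms]] by blast

end

context frozen_orbit
begin

lemma non_triangles_card_le_4:
  assumes "2 \<le> \<bar>s\<bar>" "x 0 \<noteq> 0 \<or> y 0 \<noteq> 0"
  shows "finite {l. \<not> triangle l} \<and> card {l. \<not> triangle l} \<le> 4"
proof (cases "0 < s")
  case True
  interpret frozen_orbit_pos s x y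
    using assms(1) True by unfold_locales simp
  show ?thesis using non_triangles_card_le_4_pos assms(2) .
next
  case False
  interpret neg: frozen_orbit_pos "-s" "\<lambda>l. - x l" "\<lambda>l. - y l"
    using frozen_orbit_uminus assms(1) False
    by (simp add: frozen_orbit_pos_def frozen_orbit_pos_axioms_def)
  show ?thesis
    using neg.non_triangles_card_le_4_pos assms(2) by (simp add: oriented_triangle_uminus)
qed

end

fun other :: "vtx \<Rightarrow> vtx" where
  "other V1 = V2"
| "other V2 = V1"
| "other U = U"

lemma other_other: "mutable j \<Longrightarrow> other (other j) = j"
  unfolding mutable_def by auto

lemma reduced_seq_SucD:
  "reduced_seq M \<Longrightarrow> mutable (M l) \<and> M (Suc l) = other (M l)"
  unfolding reduced_seq_def mutable_def by (metis other.simps(1,2))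

lemma skewD: "skew B \<Longrightarrow> B i k = - B k i"
  unfolding skew_def by blast

lemma skew_mut:
  assumes "skew B" shows "skew (mut j B)"
  unfolding skew_def
proof (intro allI)
  fix i k
  have "B k i = - B i k" "B j i = - B i j" "B k j = - B j k"
    using skewD[OF assms] by blast+
  then show "mut j B i k = - mut j B k i" unfolding mut_def by (simp add: algebra_simps)
qed

lemma skew_mut_seq: "skew B \<Longrightarrow> skew (mut_seq M B l)"
  by (induction l) (simp_all add: skew_mut)

lemma mut_entries:
  assumes "skew B" "mutable j"
  shows "mut j B (other j) j = B j (other j)"
    and "mut j B (other j) U = mut_frozen_entry (B j (other j)) (B j U) (B (other j) U)"
    and "mut j B j U = - B j U"
proof -
  have "B (other j) j = - B j (other j)" "B U j = - B j U"
    using skewD[OF assms(1)] by blast+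
  moreover have "other j \<noteq> j" "other j \<noteq> U" "j \<noteq> U"
    using assms(2) unfolding mutable_def by auto
  ultimately show "mut j B (other j) j = B j (other j)"
    and "mut j B (other j) U = mut_frozen_entry (B j (other j)) (B j U) (B (other j) U)"
    and "mut j B j U = - B j U"
    unfolding mut_def mut_frozen_entry_def by simp_all
qed

lemma mut_seq_exchange_entry:
  assumes "skew B" "reduced_seq M"
  shows "mut_seq M B l (M l) (other (M l)) = B (M 0) (other (M 0))"
proof (induction l)
  case (Suc l)
  have "mutable (M l)" "M (Suc l) = other (M l)"
    using reduced_seq_SucD[OF assms(2)] by auto
  then show ?case
    using Suc mut_entries(1)[OF skew_mut_seq[OF assms(1)]] by (simp add: other_other)
qed simp

lemma mut_seq_frozen_orbit:
  assumes "skew B" "reduced_seq M"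
  shows "frozen_orbit (B (M 0) (other (M 0)))
    (\<lambda>l. mut_seq M B l (M l) U) (\<lambda>l. mut_seq M B l (other (M l)) U)"
proof
  fix l
  have "mutable (M l)" "M (Suc l) = other (M l)" "other (other (M l)) = M l"
    using reduced_seq_SucD[OF assms(2)] other_other by auto
  note entries = this mut_entries[OF skew_mut_seq[OF assms(1)] this(1)]
    mut_seq_exchange_entry[OF assms]
  show "mut_seq M B (Suc l) (M (Suc l)) U = mut_frozen_entry (B (M 0) (other (M 0)))
      (mut_seq M B l (M l) U) (mut_seq M B l (other (M l)) U)"
    and "mut_seq M B (Suc l) (other (M (Suc l))) U = - mut_seq M B l (M l) U"
    by (simp_all add: entries)
qed

lemma not_acyclic_if_3_cycle:
  assumes "(a, b) \<in> r" "(b, c) \<in> r" "(c, a) \<in> r"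
  shows "\<not> acyclic r"
proof -
  have "(a, a) \<in> r\<^sup>+" using assms by (meson trancl.r_into_trancl trancl_into_trancl)
  then show ?thesis unfolding acyclic_def by blast
qed

lemma not_acyclic_if_oriented_triangle:
  assumes "skew B" "mutable j" "oriented_triangle (B j (other j)) (B j U) (B (other j) U)"
  shows "\<not> acyclic_quiver B"
proof -
  let ?k = "other j"
  have "B U j = - B j U" "B U ?k = - B ?k U" "B ?k j = - B j ?k"
    using skewD[OF assms(1)] by blast+
  then consider "(j, ?k) \<in> arrows B" "(?k, U) \<in> arrows B" "(U, j) \<in> arrows B"
    | "(j, U) \<in> arrows B" "(U, ?k) \<in> arrows B" "(?k, j) \<in> arrows B"
    using assms(3) unfolding oriented_triangle_def arrows_def by fastforce
  then show ?thesis
    unfolding acyclic_quiver_def by cases (metis not_acyclic_if_3_cycle)+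
qed

theorem mainTheorem18:
  fixes B :: quiver and M :: "nat \<Rightarrow> vtx"
  assumes "skew B"
    and "connected_quiver B"
    and "\<bar>B V1 V2\<bar> \<ge> 2"
    and "reduced_seq M"
  shows "finite {l. acyclic_quiver (mut_seq M B l)} \<and> card {l. acyclic_quiver (mut_seq M B l)} \<le> 4"
proof -
  interpret frozen_orbit "B (M 0) (other (M 0))"
      "\<lambda>l. mut_seq M B l (M l) U" "\<lambda>l. mut_seq M B l (other (M l)) U"
    using mut_seq_frozen_orbit assms(1,4) .
  have M0: "M 0 = V1 \<or> M 0 = V2"
    using reduced_seq_SucD[OF assms(4)] unfolding mutable_def by blast
  moreover have "B V2 V1 = - B V1 V2" using skewD[OF assms(1)] .
  ultimately have "2 \<le> \<bar>B (M 0) (other (M 0))\<bar>" using assms(3) by auto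
  moreover have "B (M 0) U \<noteq> 0 \<or> B (other (M 0)) U \<noteq> 0"
    using assms(2) M0 unfolding connected_quiver_def by auto
  ultimately have bound: "finite {l. \<not> triangle l} \<and> card {l. \<not> triangle l} \<le> 4"
    using non_triangles_card_le_4 by simp
  have "\<not> triangle l" if "acyclic_quiver (mut_seq M B l)" for l
  proof -
    have "mutable (M l)" using reduced_seq_SucD[OF assms(4)] by blast
    from not_acyclic_if_oriented_triangle[OF skew_mut_seq[OF assms(1), of M l] this] that
    show ?thesis unfolding mut_seq_exchange_entry[OF assms(1,4)] by blast
  qed
  then have acyclic_sub: "{l. acyclic_quiver (mut_seq M B l)} \<subseteq> {l. \<not> triangle l}"
    by blast
  show ?thesis
    using finite_subset[OF acyclic_sub] card_mono[OF _ acyclic_sub] bound le_trans by blast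
qed

end
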